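(* Let $V$ be a real sequence and suppose that for some $a>0$ the equation $(-\Delta+V)\psi=0$ has a solution $\psi^-$ with $n^a\psi^-_n\to1$ as $n\to\infty$. Then for any solution $\psi$ that is linearly independent of $\psi^-$, $|\psi^-_n\psi_n|\sim Cn$ for some constant $C>0$.
   Context: $(\Delta f)_n=f_{n+1}+f_{n-1}-2f_n$; $(-\Delta+V)\psi=0$ means $-\psi_{n+1}-\psi_{n-1}+(2+V_n)\psi_n=0$ for $n\ge1$. *)

theory Defs
  imports "HOL-Analysis.Analysis" "HOL-Library.Landau_Symbols"
begin

text \<open>Discrete Laplacian: (Delta f)_n = f_(n+1) + f_(n-1) - 2 f_n.  A sequence psi on
  the nonnegative integers solves (-Delta + V) psi = 0 if the equation holds for all n >= 1.\<close>

definition solves_schr :: "(nat \<Rightarrow> real) \<Rightarrow> (nat \<Rightarrow> real) \<Rightarrow> bool" where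
  "solves_schr V \<psi> \<longleftrightarrow>
     (\<forall>n\<ge>1. - \<psi> (n + 1) - \<psi> (n - 1) + (2 + V n) * \<psi> n = 0)"

definition lin_indep2 :: "(nat \<Rightarrow> real) \<Rightarrow> (nat \<Rightarrow> real) \<Rightarrow> bool" where
  "lin_indep2 f g \<longleftrightarrow>
     (\<forall>\<alpha> \<beta>. (\<forall>n. \<alpha> * f n + \<beta> * g n = 0) \<longrightarrow> \<alpha> = 0 \<and> \<beta> = 0)"

end

theory Submission
  imports Defs "HOL-Real_Asymp.Real_Asymp"
begin

text \<open>The Wronskian W = f n g (n+1) - f (n+1) g n of two solutions is constant, and nonzero
  when they are independent. For f positive it is the increment of g / f times f n f (n+1)
  (reduction of order), so with f n ~ n^-a the increments of g / f are ~ W n^(2a), and by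
  Stolz-Cesaro g n / f n ~ W n^(2a+1) / (2a+1). Hence f n g n = f n^2 (g n / f n) ~ W n / (2a+1).\<close>

lemma telescoping_bound:
  fixes c b :: "nat \<Rightarrow> real"
  assumes "\<And>k. k \<ge> N \<Longrightarrow> \<bar>c (Suc k) - c k\<bar> \<le> e * (b (Suc k) - b k)" and "n \<ge> N"
  shows "\<bar>c n - c N\<bar> \<le> e * (b n - b N)"
  using assms(2)
proof (induction n rule: dec_induct)
  case (step n)
  have "\<bar>c (Suc n) - c N\<bar> \<le> \<bar>c n - c N\<bar> + \<bar>c (Suc n) - c n\<bar>" by linarith
  also have "\<dots> \<le> e * (b n - b N) + e * (b (Suc n) - b n)"
    using step.IH assms(1)[OF step.hyps(1)] by linarith
  finally show ?case by (simp add: algebra_simps)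
qed simp

lemma stolz_cesaro_zero:
  fixes c b :: "nat \<Rightarrow> real"
  assumes mono: "eventually (\<lambda>n. b n < b (Suc n)) sequentially"
    and b: "filterlim b at_top sequentially"
    and lim: "(\<lambda>n. (c (Suc n) - c n) / (b (Suc n) - b n)) \<longlonglongrightarrow> 0"
  shows "(\<lambda>n. c n / b n) \<longlonglongrightarrow> 0"
proof (rule tendstoI)
  fix r :: real assume r: "r > 0"
  have "eventually (\<lambda>n. \<bar>(c (Suc n) - c n) / (b (Suc n) - b n)\<bar> < r/2) sequentially"
    using r by (intro order_tendstoD(2)[OF tendsto_rabs[OF lim]]) simp
  with mono have "eventually (\<lambda>k. \<bar>c (Suc k) - c k\<bar> \<le> r/2 * (b (Suc k) - b k)) sequentially"
  proof eventually_elim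
    case (elim k)
    then have "\<bar>c (Suc k) - c k\<bar> / (b (Suc k) - b k) < r/2"
      by simp
    with elim(1) show ?case
      by (simp add: pos_divide_less_eq)
  qed
  then obtain N where N: "\<And>k. k \<ge> N \<Longrightarrow> \<bar>c (Suc k) - c k\<bar> \<le> r/2 * (b (Suc k) - b k)"
    by (auto simp: eventually_sequentially)
  define K where "K = \<bar>c N\<bar> + r/2 * \<bar>b N\<bar>"
  have "((\<lambda>n. K / b n) \<longlongrightarrow> 0) sequentially"
    unfolding divide_inverse by (intro tendsto_mult_right_zero tendsto_inverse_0_at_top b)
  with r have small: "eventually (\<lambda>n. K / b n < r/2) sequentially"
    by (intro order_tendstoD(2)) auto
  show "eventually (\<lambda>n. dist (c n / b n) 0 < r) sequentially"
    using small filterlim_at_top_dense[THEN iffD1, OF b, rule_format, of 0] eventually_ge_at_top[of N]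
  proof eventually_elim
    case (elim n)
    have "\<bar>c n\<bar> \<le> \<bar>c N\<bar> + r/2 * (b n - b N)"
      using telescoping_bound[where c = c and b = b, OF N elim(3)] by linarith
    also have "\<dots> \<le> K + r/2 * b n"
    proof -
      have "r/2 * (- b N) \<le> r/2 * \<bar>b N\<bar>"
        using r by (intro mult_left_mono) auto
      then show ?thesis
        unfolding K_def right_diff_distrib by linarith
    qed
    finally have "\<bar>c n\<bar> / b n \<le> (K + r/2 * b n) / b n"
      using elim(2) by (intro divide_right_mono) auto
    also have "\<dots> = K / b n + r/2"
      using elim(2) by (simp add: add_divide_distrib)
    also have "\<dots> < r"
      using elim(1) by (simp add: field_simps)
    finally have "\<bar>c n\<bar> / b n < r" .
    with elim(2) show ?case
      by (simp add: abs_divide)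
  qed
qed

lemma stolz_cesaro:
  fixes a b :: "nat \<Rightarrow> real"
  assumes mono: "eventually (\<lambda>n. b n < b (Suc n)) sequentially"
    and b: "filterlim b at_top sequentially"
    and lim: "(\<lambda>n. (a (Suc n) - a n) / (b (Suc n) - b n)) \<longlonglongrightarrow> L"
  shows "(\<lambda>n. a n / b n) \<longlonglongrightarrow> L"
proof -
  define c where "c n = a n - L * b n" for n
  have "(\<lambda>n. (a (Suc n) - a n) / (b (Suc n) - b n) - L) \<longlonglongrightarrow> 0"
    using tendsto_diff[OF lim tendsto_const[of L]] by simp
  moreover have "eventually (\<lambda>n. (a (Suc n) - a n) / (b (Suc n) - b n) - L
      = (c (Suc n) - c n) / (b (Suc n) - b n)) sequentially"
    using mono by eventually_elim (simp add: c_def field_simps)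
  ultimately have "(\<lambda>n. c n / b n) \<longlonglongrightarrow> 0"
    by (intro stolz_cesaro_zero[OF mono b]) (rule Lim_transform_eventually)
  then have "(\<lambda>n. c n / b n + L) \<longlonglongrightarrow> 0 + L"
    by (intro tendsto_add tendsto_const)
  moreover have "eventually (\<lambda>n. c n / b n + L = a n / b n) sequentially"
    using filterlim_at_top_dense[THEN iffD1, OF b, rule_format, of 0]
    by eventually_elim (simp add: c_def field_simps)
  ultimately show ?thesis
    by (simp add: Lim_transform_eventually)
qed

lemma solves_schr_Suc_Suc:
  assumes "solves_schr V f"
  shows "f (Suc (Suc n)) = (2 + V (Suc n)) * f (Suc n) - f n"
  using assms unfolding solves_schr_def by (auto elim!: allE[of _ "Suc n"])

lemma solves_schr_lincomb:
  assumes f: "solves_schr V f" and g: "solves_schr V g"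
  shows "solves_schr V (\<lambda>n. \<alpha> * f n + \<beta> * g n)"
  unfolding solves_schr_def
proof (intro allI impI)
  fix n :: nat assume "n \<ge> 1"
  with f g have "- f (n + 1) - f (n - 1) + (2 + V n) * f n = 0"
    and "- g (n + 1) - g (n - 1) + (2 + V n) * g n = 0"
    by (auto simp: solves_schr_def)
  moreover have "- (\<alpha> * f (n + 1) + \<beta> * g (n + 1)) - (\<alpha> * f (n - 1) + \<beta> * g (n - 1))
      + (2 + V n) * (\<alpha> * f n + \<beta> * g n)
    = \<alpha> * (- f (n + 1) - f (n - 1) + (2 + V n) * f n)
      + \<beta> * (- g (n + 1) - g (n - 1) + (2 + V n) * g n)"
    by (simp add: algebra_simps)
  ultimately show "- (\<alpha> * f (n + 1) + \<beta> * g (n + 1)) - (\<alpha> * f (n - 1) + \<beta> * g (n - 1))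
      + (2 + V n) * (\<alpha> * f n + \<beta> * g n) = 0"
    by simp
qed

lemma solves_schr_eq_0:
  assumes f: "solves_schr V f" and "f m = 0" "f (Suc m) = 0"
  shows "f n = 0"
proof -
  have forward: "f k = 0 \<and> f (Suc k) = 0" if "m \<le> k" for k
    using that
  proof (induction k rule: dec_induct)
    case (step k)
    then show ?case using solves_schr_Suc_Suc[OF f, of k] by simp
  qed (use assms in simp)
  have backward: "f k = 0 \<and> f (Suc k) = 0" if "k \<le> m" for k
    using that
  proof (induction k rule: inc_induct)
    case (step k)
    then have "f (Suc k) = 0" "f (Suc (Suc k)) = 0" by simp_all
    with solves_schr_Suc_Suc[OF f, of k] show ?case by simp
  qed (use assms in simp)
  show ?thesis
    using forward[of n] backward[of n] by linarith
qed

definition wronskian :: "(nat \<Rightarrow> real) \<Rightarrow> (nat \<Rightarrow> real) \<Rightarrow> nat \<Rightarrow> real" where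
  "wronskian f g n = f n * g (Suc n) - f (Suc n) * g n"

lemma wronskian_Suc:
  assumes "solves_schr V f" "solves_schr V g"
  shows "wronskian f g (Suc n) = wronskian f g n"
  unfolding wronskian_def solves_schr_Suc_Suc[OF assms(1)] solves_schr_Suc_Suc[OF assms(2)]
  by (simp add: algebra_simps)

lemma wronskian_const:
  assumes "solves_schr V f" "solves_schr V g"
  shows "wronskian f g n = wronskian f g 0"
  by (induction n) (simp_all add: wronskian_Suc[OF assms])

lemma lin_indep2_imp_wronskian_nonzero:
  assumes f: "solves_schr V f" and g: "solves_schr V g" and indep: "lin_indep2 f g"
  shows "wronskian f g m \<noteq> 0"
proof
  assume W: "wronskian f g m = 0"
  obtain k where fk: "f k \<noteq> 0"
    using indep[unfolded lin_indep2_def, rule_format, of 1 0] by auto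
  define h where "h n = - g k * f n + f k * g n" for n
  have "solves_schr V h"
    unfolding h_def by (intro solves_schr_lincomb f g)
  moreover have "h k = 0" "h (Suc k) = 0"
    using W wronskian_const[OF f g, of k] wronskian_const[OF f g, of m]
    by (simp_all add: h_def wronskian_def algebra_simps)
  ultimately have "\<forall>n. - g k * f n + f k * g n = 0"
    using solves_schr_eq_0 unfolding h_def by blast
  with indep fk show False
    unfolding lin_indep2_def by blast
qed

lemma ratio_increment_wronskian:
  assumes "f n \<noteq> 0" "f (Suc n) \<noteq> 0"
  shows "g (Suc n) / f (Suc n) - g n / f n = wronskian f g n / (f n * f (Suc n))"
  using assms by (simp add: wronskian_def field_simps)

lemma powr_mult_tendsto_imp_eventually_pos:
  assumes "(\<lambda>n. real n powr a * f n) \<longlonglongrightarrow> 1"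
  shows "eventually (\<lambda>n. f n > 0) sequentially"
proof -
  have "eventually (\<lambda>n. real n powr a * f n > 0) sequentially"
    using assms by (rule order_tendstoD(1)) simp
  then show ?thesis
    by eventually_elim (simp add: zero_less_mult_iff)
qed

lemma ratio_asymptotics:
  fixes f g :: "nat \<Rightarrow> real"
  assumes a: "a > -1/2"
    and f: "(\<lambda>n. real n powr a * f n) \<longlonglongrightarrow> 1"
    and W: "\<And>n. wronskian f g n = w"
  shows "(\<lambda>n. g n / f n / real n powr (2 * a + 1)) \<longlonglongrightarrow> w / (2 * a + 1)"
proof -
  define q where "q = 2 * a + 1"
  have q: "q > 0" using a by (simp add: q_def)
  have f_pos: "eventually (\<lambda>n. f n > 0) sequentially"
    using f by (rule powr_mult_tendsto_imp_eventually_pos)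
  have f_Suc: "(\<lambda>n. real (Suc n) powr a * f (Suc n)) \<longlonglongrightarrow> 1"
    using LIMSEQ_Suc[OF f] by simp
  have gap: "(\<lambda>n::nat. real n powr a * real (Suc n) powr a / (real (Suc n) powr q - real n powr q))
      \<longlonglongrightarrow> inverse q"
    unfolding q_def using a by real_asymp
  have "(\<lambda>n. w * (1 / (real n powr a * f n)) * (1 / (real (Suc n) powr a * f (Suc n)))
      * (real n powr a * real (Suc n) powr a / (real (Suc n) powr q - real n powr q)))
      \<longlonglongrightarrow> w * (1 / 1) * (1 / 1) * inverse q"
    by (intro tendsto_intros f f_Suc gap) simp_all
  moreover have "eventually (\<lambda>n. w * (1 / (real n powr a * f n)) * (1 / (real (Suc n) powr a * f (Suc n)))
      * (real n powr a * real (Suc n) powr a / (real (Suc n) powr q - real n powr q))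
      = (g (Suc n) / f (Suc n) - g n / f n) / (real (Suc n) powr q - real n powr q)) sequentially"
    using f_pos eventually_sequentially_Suc[THEN iffD2, OF f_pos] eventually_gt_at_top[of 0]
  proof eventually_elim
    case (elim n)
    then have "g (Suc n) / f (Suc n) - g n / f n = w / (f n * f (Suc n))"
      by (simp add: ratio_increment_wronskian W)
    with elim show ?case
      by (simp add: field_simps)
  qed
  ultimately have "(\<lambda>n. (g (Suc n) / f (Suc n) - g n / f n) / (real (Suc n) powr q - real n powr q))
      \<longlonglongrightarrow> w * (1 / 1) * (1 / 1) * inverse q"
    by (rule Lim_transform_eventually)
  then have quotient: "(\<lambda>n. (g (Suc n) / f (Suc n) - g n / f n) / (real (Suc n) powr q - real n powr q))
      \<longlonglongrightarrow> w / q"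
    by (rule tendsto_cong_limit) (simp add: divide_inverse)
  have mono: "eventually (\<lambda>n. real n powr q < real (Suc n) powr q) sequentially"
    using q by (intro always_eventually allI powr_less_mono2) auto
  have unbounded: "filterlim (\<lambda>n. real n powr q) at_top sequentially"
    using q by real_asymp
  show ?thesis
    unfolding q_def[symmetric] by (rule stolz_cesaro[OF mono unbounded quotient])
qed

lemma product_asymptotics:
  fixes f g :: "nat \<Rightarrow> real"
  assumes a: "a > -1/2"
    and f: "(\<lambda>n. real n powr a * f n) \<longlonglongrightarrow> 1"
    and W: "\<And>n. wronskian f g n = w"
  shows "(\<lambda>n. f n * g n / real n) \<longlonglongrightarrow> w / (2 * a + 1)"
proof -
  have "(\<lambda>n. (real n powr a * f n) * (real n powr a * f n) * (g n / f n / real n powr (2 * a + 1)))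
      \<longlonglongrightarrow> 1 * 1 * (w / (2 * a + 1))"
    by (intro tendsto_mult f ratio_asymptotics[OF a f W])
  moreover have "eventually (\<lambda>n. (real n powr a * f n) * (real n powr a * f n)
      * (g n / f n / real n powr (2 * a + 1)) = f n * g n / real n) sequentially"
    using powr_mult_tendsto_imp_eventually_pos[OF f] eventually_gt_at_top[of 0]
  proof eventually_elim
    case (elim n)
    have "real n powr (2 * a + 1) = real n powr (a + a + 1)"
      by (simp add: algebra_simps)
    also have "\<dots> = real n powr a * real n powr a * real n powr 1"
      by (simp only: powr_add)
    also have "\<dots> = real n powr a * real n powr a * real n"
      using elim(2) by simp
    finally have "real n powr (2 * a + 1) = real n powr a * real n powr a * real n" .
    with elim show ?case
      by (simp add: field_simps)
  qed
  ultimately show ?thesis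
    by (rule Lim_transform_eventually[THEN tendsto_cong_limit]) simp
qed

lemma tendsto_divide_real_imp_abs_asymp_equiv:
  fixes h :: "nat \<Rightarrow> real"
  assumes h: "(\<lambda>n. h n / real n) \<longlonglongrightarrow> L" and L: "L \<noteq> 0"
  shows "(\<lambda>n. \<bar>h n\<bar>) \<sim>[at_top] (\<lambda>n. \<bar>L\<bar> * real n)"
proof (rule asymp_equivI')
  have "(\<lambda>n. \<bar>h n / real n\<bar> / \<bar>L\<bar>) \<longlonglongrightarrow> \<bar>L\<bar> / \<bar>L\<bar>"
    by (rule tendsto_divide[OF tendsto_rabs[OF h] tendsto_const]) (use L in simp)
  moreover have "eventually (\<lambda>n. \<bar>h n / real n\<bar> / \<bar>L\<bar> = \<bar>h n\<bar> / (\<bar>L\<bar> * real n)) sequentially"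
    using eventually_gt_at_top[of 0] by eventually_elim (simp add: abs_divide)
  ultimately show "(\<lambda>n. \<bar>h n\<bar> / (\<bar>L\<bar> * real n)) \<longlonglongrightarrow> 1"
    using L by (simp add: Lim_transform_eventually)
qed

theorem corollary4:
  fixes V \<psi>m :: "nat \<Rightarrow> real" and a :: real
  assumes "a > 0"
    and "solves_schr V \<psi>m"
    and "(\<lambda>n. real n powr a * \<psi>m n) \<longlonglongrightarrow> 1"
  shows "\<forall>\<psi>. solves_schr V \<psi> \<and> lin_indep2 \<psi>m \<psi> \<longrightarrow>
           (\<exists>C>0. (\<lambda>n. \<bar>\<psi>m n * \<psi> n\<bar>) \<sim>[at_top] (\<lambda>n. C * real n))"
proof (intro allI impI)
  fix \<psi> assume "solves_schr V \<psi> \<and> lin_indep2 \<psi>m \<psi>"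
  then have \<psi>: "solves_schr V \<psi>" and indep: "lin_indep2 \<psi>m \<psi>" by simp_all
  define w where "w = wronskian \<psi>m \<psi> 0"
  have "w \<noteq> 0"
    unfolding w_def by (rule lin_indep2_imp_wronskian_nonzero[OF assms(2) \<psi> indep])
  with assms(1) have L: "w / (2 * a + 1) \<noteq> 0" by simp
  have "wronskian \<psi>m \<psi> n = w" for n
    unfolding w_def by (rule wronskian_const[OF assms(2) \<psi>])
  then have "(\<lambda>n. \<psi>m n * \<psi> n / real n) \<longlonglongrightarrow> w / (2 * a + 1)"
    using assms(1) by (intro product_asymptotics[OF _ assms(3)]) simp_all
  with L show "\<exists>C>0. (\<lambda>n. \<bar>\<psi>m n * \<psi> n\<bar>) \<sim>[at_top] (\<lambda>n. C * real n)"
    by (intro exI[of _ "\<bar>w / (2 * a + 1)\<bar>"] conjI tendsto_divide_real_imp_abs_asymp_equiv) auto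
qed

end
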